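(* Under the standing assumptions, the commutator of $R^\beta$ in $R$ satisfies $$V_R(R^\beta)=\bigoplus_{g\in\mathcal G}J_g,$$ i.e. $V_R(R^\beta)=\sum_{g\in\mathcal G}J_g$ and this sum of $C(R)$-submodules of $R$ is direct.
   Context: All rings and algebras are associative and unital. A groupoid is a nonempty set $\mathcal G$ with a partially defined associative multiplication in which every $g$ has an inverse $g^{-1}$, a left identity $r(g)=gg^{-1}$ and a right identity $d(g)=g^{-1}g$; $gh$ is defined iff $d(g)=r(h)$; $\mathcal G_0$ is the set of identities. Standing assumptions: $K$ is a commutative ring, $R$ a $K$-algebra, $\mathcal G$ a finite groupoid, $\beta=(\{E_g\}_{g\in\mathcal G},\{\beta_g\}_{g\in\mathcal G})$ a unital action of $\mathcal G$ on $R$, meaning: for each $g$, $E_g=E_{r(g)}$ is an ideal of $R$ which is a unital ring with identity $1_g$ (so $1_{g^{-1}}=1_{d(g)}$), $\beta_g:E_{g^{-1}}\to E_g$ is a $K$-algebra isomorphism, $\beta_e=\mathrm{id}_{E_e}$ for $e\in\mathcal G_0$, and $\beta_g\beta_h(x)=\beta_{gh}(x)$ whenever $d(g)=r(h)$, $x\in E_{h^{-1}}$. Moreover $R=\bigoplus_{e\in\mathcal G_0}E_e$, and $R$ is a $\beta$-Galois extension of $R^\beta=\{r\in R:\beta_g(r1_{g^{-1}})=r1_g\ \forall g\in\mathcal G\}$, i.e. there exist $x_1,\dots,x_m,y_1,\dots,y_m\in R$ with $\sum_i x_i\beta_g(y_i1_{g^{-1}})=1_g$ if $g\in\mathcal G_0$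 and $=0$ otherwise. $C(R)$ is the center of $R$; for subrings $S_1,S_2$ of $R$, $V_{S_2}(S_1)=\{r\in S_2: rs=sr\ \forall s\in S_1\}$. For $g\in\mathcal G$, $J_g=\{r\in E_g: r\beta_g(x1_{g^{-1}})=xr \text{ for all } x\in R\}$, a $C(R)$-submodule of $R$. *)

theory Defs
  imports Main
begin

text \<open>Finite groupoid: carrier G, multiplication mul (only meaningful on composable
pairs, i.e. when gdom g = gran h), inverse ginv.\<close>

definition gran :: "('g \<Rightarrow> 'g \<Rightarrow> 'g) \<Rightarrow> ('g \<Rightarrow> 'g) \<Rightarrow> 'g \<Rightarrow> 'g" where
  "gran mul ginv g = mul g (ginv g)"

definition gdom :: "('g \<Rightarrow> 'g \<Rightarrow> 'g) \<Rightarrow> ('g \<Rightarrow> 'g) \<Rightarrow> 'g \<Rightarrow> 'g" where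
  "gdom mul ginv g = mul (ginv g) g"

definition groupoid :: "'g set \<Rightarrow> ('g \<Rightarrow> 'g \<Rightarrow> 'g) \<Rightarrow> ('g \<Rightarrow> 'g) \<Rightarrow> bool" where
  "groupoid G mul ginv \<longleftrightarrow>
     G \<noteq> {} \<and>
     (\<forall>g\<in>G. ginv g \<in> G \<and> ginv (ginv g) = g) \<and>
     (\<forall>g\<in>G. \<forall>h\<in>G. gdom mul ginv g = gran mul ginv h \<longrightarrow>
        mul g h \<in> G \<and> gran mul ginv (mul g h) = gran mul ginv g
        \<and> gdom mul ginv (mul g h) = gdom mul ginv h) \<and>
     (\<forall>g\<in>G. \<forall>h\<in>G. \<forall>l\<in>G. gdom mul ginv g = gran mul ginv h \<longrightarrow> gdom mul ginv h = gran mul ginv l \<longrightarrow>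
        mul (mul g h) l = mul g (mul h l)) \<and>
     (\<forall>g\<in>G. mul (gran mul ginv g) g = g \<and> mul g (gdom mul ginv g) = g)"

definition gidents :: "'g set \<Rightarrow> ('g \<Rightarrow> 'g \<Rightarrow> 'g) \<Rightarrow> ('g \<Rightarrow> 'g) \<Rightarrow> 'g set" where
  "gidents G mul ginv = gdom mul ginv ` G"

definition is_algebra :: "('k::comm_ring_1 \<Rightarrow> 'r::ring_1 \<Rightarrow> 'r) \<Rightarrow> bool" where
  "is_algebra sc \<longleftrightarrow>
     (\<forall>a x y. sc a (x + y) = sc a x + sc a y) \<and>
     (\<forall>a b x. sc (a + b) x = sc a x + sc b x) \<and>
     (\<forall>a b x. sc (a * b) x = sc a (sc b x)) \<and>
     (\<forall>x. sc 1 x = x) \<and>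
     (\<forall>a x y. sc a (x * y) = sc a x * y \<and> sc a (x * y) = x * sc a y)"

definition is_ideal :: "'r::ring_1 set \<Rightarrow> bool" where
  "is_ideal I \<longleftrightarrow> 0 \<in> I \<and> (\<forall>x\<in>I. \<forall>y\<in>I. x + y \<in> I) \<and> (\<forall>x\<in>I. - x \<in> I) \<and>
     (\<forall>x\<in>I. \<forall>r. r * x \<in> I \<and> x * r \<in> I)"

text \<open>Unital action of the groupoid on R (whole type) with R = direct sum of the E_e.\<close>
definition unital_action ::
  "('k::comm_ring_1 \<Rightarrow> 'r::ring_1 \<Rightarrow> 'r) \<Rightarrow> 'g set \<Rightarrow> ('g \<Rightarrow> 'g \<Rightarrow> 'g) \<Rightarrow> ('g \<Rightarrow> 'g)
    \<Rightarrow> ('g \<Rightarrow> 'r set) \<Rightarrow> ('g \<Rightarrow> 'r) \<Rightarrow> ('g \<Rightarrow> 'r \<Rightarrow> 'r) \<Rightarrow> bool" where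
  "unital_action sc G mul ginv E one \<beta> \<longleftrightarrow>
     (\<forall>g\<in>G. E g = E (gran mul ginv g)) \<and>
     (\<forall>g\<in>G. is_ideal (E g)) \<and>
     (\<forall>g\<in>G. one g \<in> E g \<and> (\<forall>x\<in>E g. one g * x = x \<and> x * one g = x)) \<and>
     (\<forall>g\<in>G. one g = one (gran mul ginv g)) \<and>
     (\<forall>g\<in>G. bij_betw (\<beta> g) (E (ginv g)) (E g) \<and>
        (\<forall>x\<in>E (ginv g). \<forall>y\<in>E (ginv g). \<beta> g (x + y) = \<beta> g x + \<beta> g y \<and> \<beta> g (x * y) = \<beta> g x * \<beta> g y) \<and>
        (\<forall>a. \<forall>x\<in>E (ginv g). \<beta> g (sc a x) = sc a (\<beta> g x)) \<and>
        \<beta> g (one (ginv g)) = one g) \<and>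
     (\<forall>e\<in>gidents G mul ginv. \<forall>x\<in>E e. \<beta> e x = x) \<and>
     (\<forall>g\<in>G. \<forall>h\<in>G. gdom mul ginv g = gran mul ginv h \<longrightarrow>
        (\<forall>x\<in>E (ginv h). \<beta> g (\<beta> h x) = \<beta> (mul g h) x)) \<and>
     (\<forall>x. \<exists>!f. (\<forall>e\<in>gidents G mul ginv. f e \<in> E e) \<and> (\<forall>e. e \<notin> gidents G mul ginv \<longrightarrow> f e = 0)
            \<and> x = (\<Sum>e\<in>gidents G mul ginv. f e))"

definition invariants :: "'g set \<Rightarrow> ('g \<Rightarrow> 'g) \<Rightarrow> ('g \<Rightarrow> 'r::ring_1) \<Rightarrow> ('g \<Rightarrow> 'r \<Rightarrow> 'r) \<Rightarrow> 'r set" where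
  "invariants G ginv one \<beta> = {r. \<forall>g\<in>G. \<beta> g (r * one (ginv g)) = r * one g}"

definition galois_ext :: "'g set \<Rightarrow> ('g \<Rightarrow> 'g \<Rightarrow> 'g) \<Rightarrow> ('g \<Rightarrow> 'g) \<Rightarrow> ('g \<Rightarrow> 'r::ring_1) \<Rightarrow> ('g \<Rightarrow> 'r \<Rightarrow> 'r) \<Rightarrow> bool" where
  "galois_ext G mul ginv one \<beta> \<longleftrightarrow>
     (\<exists>m::nat. \<exists>x y :: nat \<Rightarrow> 'r. \<forall>g\<in>G.
        (\<Sum>i<m. x i * \<beta> g (y i * one (ginv g))) = (if g \<in> gidents G mul ginv then one g else 0))"

definition commutant :: "'r::ring_1 set \<Rightarrow> 'r set \<Rightarrow> 'r set" where
  "commutant S2 S1 = {r\<in>S2. \<forall>s\<in>S1. r * s = s * r}"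

definition Jset :: "('g \<Rightarrow> 'g) \<Rightarrow> ('g \<Rightarrow> 'r set) \<Rightarrow> ('g \<Rightarrow> 'r::ring_1) \<Rightarrow> ('g \<Rightarrow> 'r \<Rightarrow> 'r) \<Rightarrow> 'g \<Rightarrow> 'r set" where
  "Jset ginv E one \<beta> g = {r\<in>E g. \<forall>x. r * \<beta> g (x * one (ginv g)) = x * r}"

end

theory Submission
  imports Defs
begin

text \<open>Write \<open>act g x = \<beta>\<^sub>g(x 1\<^bsub>g\<inverse>\<^esub>)\<close> and \<open>trace x = \<Sum>\<^sub>g act g x\<close>; the trace
  takes values in \<open>R\<^sup>\<beta>\<close>. The Galois coordinates \<open>x\<^sub>i, y\<^sub>i\<close> give the two expansions
  \<open>r = \<Sum>\<^sub>i x\<^sub>i trace (y\<^sub>i r) = \<Sum>\<^sub>i trace (r x\<^sub>i) y\<^sub>i\<close>. An element \<open>c\<close> commuting with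
  \<open>R\<^sup>\<beta>\<close> commutes with all traces, and with the two expansions this shows that
  \<open>c\<^sub>g = \<Sum>\<^sub>i x\<^sub>i c act g y\<^sub>i\<close> lies in \<open>J\<^sub>g\<close>, while \<open>\<Sum>\<^sub>g c\<^sub>g = \<Sum>\<^sub>i x\<^sub>i trace (y\<^sub>i) c = c\<close>.
  Conversely every \<open>J\<^sub>g\<close> commutes with \<open>R\<^sup>\<beta>\<close>. The sum is direct because
  \<open>a \<Sum>\<^sub>i act g x\<^sub>i act h y\<^sub>i = \<delta>\<^sub>g\<^sub>h a\<close> for \<open>a \<in> J\<^sub>g\<close>: multiplying a vanishing sum \<open>\<Sum>\<^sub>g a\<^sub>g\<close>
  by \<open>x\<^sub>i\<close> on the left and \<open>act h y\<^sub>i\<close> on the right and summing over \<open>i\<close> isolates \<open>a\<^sub>h\<close>.\<close>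

locale groupoid_unital_action =
  fixes sc :: "'k::comm_ring_1 \<Rightarrow> 'r::ring_1 \<Rightarrow> 'r"
    and G :: "'g set" and mul :: "'g \<Rightarrow> 'g \<Rightarrow> 'g" and ginv :: "'g \<Rightarrow> 'g"
    and E :: "'g \<Rightarrow> 'r set" and one :: "'g \<Rightarrow> 'r" and \<beta> :: "'g \<Rightarrow> 'r \<Rightarrow> 'r"
  assumes groupoid: "groupoid G mul ginv" and finite_G: "finite G"
    and action: "unital_action sc G mul ginv E one \<beta>"
begin

abbreviation tgt :: "'g \<Rightarrow> 'g" where "tgt g \<equiv> gran mul ginv g"
abbreviation src :: "'g \<Rightarrow> 'g" where "src g \<equiv> gdom mul ginv g"
abbreviation idents :: "'g set" where "idents \<equiv> gidents G mul ginv"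

lemma inv_closed: "g \<in> G \<Longrightarrow> ginv g \<in> G"
  and inv_inv: "g \<in> G \<Longrightarrow> ginv (ginv g) = g"
  using groupoid unfolding groupoid_def by auto

lemma mul_closed:
  "g \<in> G \<Longrightarrow> h \<in> G \<Longrightarrow> src g = tgt h \<Longrightarrow> mul g h \<in> G \<and> tgt (mul g h) = tgt g \<and> src (mul g h) = src h"
  using groupoid unfolding groupoid_def by blast

lemma mul_assoc:
  "g \<in> G \<Longrightarrow> h \<in> G \<Longrightarrow> l \<in> G \<Longrightarrow> src g = tgt h \<Longrightarrow> src h = tgt l \<Longrightarrow> mul (mul g h) l = mul g (mul h l)"
  using groupoid unfolding groupoid_def by blast

lemma tgt_mul_left: "g \<in> G \<Longrightarrow> mul (tgt g) g = g"
  and mul_src_right: "g \<in> G \<Longrightarrow> mul g (src g) = g"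
  using groupoid unfolding groupoid_def by blast+

lemma src_inv: "g \<in> G \<Longrightarrow> src (ginv g) = tgt g"
  and tgt_inv: "g \<in> G \<Longrightarrow> tgt (ginv g) = src g"
  by (simp_all add: gdom_def gran_def inv_inv)

lemma src_in_idents: "g \<in> G \<Longrightarrow> src g \<in> idents"
  unfolding gidents_def by auto

lemma tgt_in_idents: "g \<in> G \<Longrightarrow> tgt g \<in> idents"
  using src_in_idents[of "ginv g"] by (simp add: inv_closed src_inv)

lemma idents_subset: "idents \<subseteq> G"
proof
  fix e assume "e \<in> idents"
  then obtain g where g: "g \<in> G" "e = src g" unfolding gidents_def by auto
  have "mul (ginv g) g \<in> G" using mul_closed[OF inv_closed[OF g(1)] g(1)] src_inv[OF g(1)] by blast
  then show "e \<in> G" using g by (simp add: gdom_def)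
qed

lemma finite_idents: "finite idents"
  using finite_subset[OF idents_subset finite_G] .

lemma tgt_ident: "e \<in> idents \<Longrightarrow> tgt e = e"
  and src_ident: "e \<in> idents \<Longrightarrow> src e = e"
proof -
  assume "e \<in> idents"
  then obtain g where g: "g \<in> G" "e = src g" unfolding gidents_def by auto
  have "tgt (mul (ginv g) g) = tgt (ginv g)" "src (mul (ginv g) g) = src g"
    using mul_closed[of "ginv g" g] g by (simp_all add: inv_closed src_inv)
  then show "tgt e = e" "src e = e" using g by (simp_all add: tgt_inv gdom_def)
qed

lemma inv_ident: "e \<in> idents \<Longrightarrow> ginv e = e"
proof -
  assume e: "e \<in> idents"
  then have eG: "e \<in> G" using idents_subset by auto
  have "ginv e = mul (tgt (ginv e)) (ginv e)" using tgt_mul_left[OF inv_closed[OF eG]] by simp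
  also have "\<dots> = tgt e" using tgt_inv[OF eG] src_ident[OF e] by (simp add: gran_def)
  finally show ?thesis using tgt_ident[OF e] by simp
qed

lemma inv_mul_cancel_left: "h \<in> G \<Longrightarrow> a \<in> G \<Longrightarrow> tgt a = src h \<Longrightarrow> mul (ginv h) (mul h a) = a"
  using mul_assoc[of "ginv h" h a] inv_closed[of h] src_inv[of h] tgt_mul_left[of a]
  by (simp add: gdom_def)

lemma mul_inv_cancel_left: "h \<in> G \<Longrightarrow> b \<in> G \<Longrightarrow> tgt b = tgt h \<Longrightarrow> mul h (mul (ginv h) b) = b"
  using mul_assoc[of h "ginv h" b] inv_closed[of h] src_inv[of h] tgt_inv[of h] tgt_mul_left[of b]
  by (simp add: gran_def)

lemma E_tgt: "g \<in> G \<Longrightarrow> E g = E (tgt g)"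
  and one_tgt: "g \<in> G \<Longrightarrow> one g = one (tgt g)"
  and ideal_E: "g \<in> G \<Longrightarrow> is_ideal (E g)"
  and one_in_E: "g \<in> G \<Longrightarrow> one g \<in> E g"
  and one_mult: "g \<in> G \<Longrightarrow> x \<in> E g \<Longrightarrow> one g * x = x"
  and mult_one: "g \<in> G \<Longrightarrow> x \<in> E g \<Longrightarrow> x * one g = x"
  and \<beta>_bij: "g \<in> G \<Longrightarrow> bij_betw (\<beta> g) (E (ginv g)) (E g)"
  and \<beta>_add: "g \<in> G \<Longrightarrow> x \<in> E (ginv g) \<Longrightarrow> y \<in> E (ginv g) \<Longrightarrow> \<beta> g (x + y) = \<beta> g x + \<beta> g y"
  and \<beta>_mult: "g \<in> G \<Longrightarrow> x \<in> E (ginv g) \<Longrightarrow> y \<in> E (ginv g) \<Longrightarrow> \<beta> g (x * y) = \<beta> g x * \<beta> g y"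
  and \<beta>_one: "g \<in> G \<Longrightarrow> \<beta> g (one (ginv g)) = one g"
  and \<beta>_ident: "e \<in> idents \<Longrightarrow> x \<in> E e \<Longrightarrow> \<beta> e x = x"
  and \<beta>_comp: "g \<in> G \<Longrightarrow> h \<in> G \<Longrightarrow> src g = tgt h \<Longrightarrow> x \<in> E (ginv h) \<Longrightarrow> \<beta> g (\<beta> h x) = \<beta> (mul g h) x"
  using action unfolding unital_action_def by auto

lemma \<beta>_in_E: "g \<in> G \<Longrightarrow> x \<in> E (ginv g) \<Longrightarrow> \<beta> g x \<in> E g"
  by (rule bij_betw_apply[OF \<beta>_bij])

lemma unique_decomposition:
  "\<exists>!f. (\<forall>e\<in>idents. f e \<in> E e) \<and> (\<forall>e. e \<notin> idents \<longrightarrow> f e = 0) \<and> x = (\<Sum>e\<in>idents. f e)"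
  using action unfolding unital_action_def by (elim conjE) (erule spec)

lemma E_inv: "g \<in> G \<Longrightarrow> E (ginv g) = E (src g)"
  and one_inv: "g \<in> G \<Longrightarrow> one (ginv g) = one (src g)"
  using E_tgt[OF inv_closed] one_tgt[OF inv_closed] by (simp_all add: tgt_inv)

lemma zero_in_E: "g \<in> G \<Longrightarrow> 0 \<in> E g"
  and add_in_E: "g \<in> G \<Longrightarrow> x \<in> E g \<Longrightarrow> y \<in> E g \<Longrightarrow> x + y \<in> E g"
  and mult_left_in_E: "g \<in> G \<Longrightarrow> x \<in> E g \<Longrightarrow> y * x \<in> E g"
  and mult_right_in_E: "g \<in> G \<Longrightarrow> x \<in> E g \<Longrightarrow> x * y \<in> E g"
  using ideal_E unfolding is_ideal_def by blast+

lemma sum_in_E: "g \<in> G \<Longrightarrow> (\<And>i. i \<in> I \<Longrightarrow> f i \<in> E g) \<Longrightarrow> sum f I \<in> E g"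
  by (induction I rule: infinite_finite_induct) (auto intro: zero_in_E add_in_E)

text \<open>\<open>xy \<in> E\<^sub>e \<inter> E\<^sub>e\<^sub>'\<close> has two decompositions.\<close>
lemma E_orthogonal:
  assumes e: "e \<in> idents" and e': "e' \<in> idents" and "e \<noteq> e'" and x: "x \<in> E e" and y: "y \<in> E e'"
  shows "x * y = 0"
proof -
  define decomposes where "decomposes f \<longleftrightarrow> (\<forall>k\<in>idents. f k \<in> E k) \<and>
    (\<forall>k. k \<notin> idents \<longrightarrow> f k = 0) \<and> x * y = (\<Sum>k\<in>idents. f k)" for f
  let ?single = "\<lambda>d k. if k = d then x * y else 0"
  have "x * y \<in> E e" "x * y \<in> E e'"
    using mult_right_in_E[OF _ x] mult_left_in_E[OF _ y] e e' idents_subset by auto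
  then have "decomposes (?single e)" "decomposes (?single e')"
    unfolding decomposes_def using e e' finite_idents idents_subset zero_in_E by auto
  moreover have "\<exists>!f. decomposes f"
    unfolding decomposes_def by (rule unique_decomposition)
  ultimately have "?single e = ?single e'" by blast
  then have "?single e e = ?single e' e" by (rule fun_cong)
  then show ?thesis using \<open>e \<noteq> e'\<close> by simp
qed

lemma one_mult_E:
  assumes e: "e \<in> idents" and g: "g \<in> G" and x: "x \<in> E g"
  shows "one e * x = (if tgt g = e then x else 0)" and "x * one e = (if tgt g = e then x else 0)"
proof -
  have x': "x \<in> E (tgt g)" and one_e: "one e \<in> E e"
    using x E_tgt[OF g] one_in_E e idents_subset by auto
  have "one e * x = (if tgt g = e then x else 0) \<and> x * one e = (if tgt g = e then x else 0)"
  proof (cases "tgt g = e")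
    case True
    then have "one e = one g" using one_tgt[OF g] by simp
    then show ?thesis using True one_mult[OF g x] mult_one[OF g x] by simp
  next
    case False
    then show ?thesis
      using E_orthogonal[OF e tgt_in_idents[OF g] _ one_e x'] E_orthogonal[OF tgt_in_idents[OF g] e _ x' one_e]
      by auto
  qed
  then show "one e * x = (if tgt g = e then x else 0)" and "x * one e = (if tgt g = e then x else 0)"
    by blast+
qed

lemma sum_one_idents: "(\<Sum>e\<in>idents. one e) = 1"
proof -
  obtain f where f: "\<forall>e\<in>idents. f e \<in> E e" "1 = (\<Sum>e\<in>idents. f e)"
    using unique_decomposition[of 1] by blast
  have "one e = f e" if e: "e \<in> idents" for e
  proof -
    have "one e = (\<Sum>k\<in>idents. one e * f k)" using f(2) by (simp add: sum_distrib_left[symmetric])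
    also have "\<dots> = (\<Sum>k\<in>idents. if k = e then f e else 0)"
      using e f(1) idents_subset by (intro sum.cong) (auto simp: one_mult_E tgt_ident)
    also have "\<dots> = f e" using e finite_idents by simp
    finally show ?thesis .
  qed
  then show ?thesis using f(2) by simp
qed

lemma one_central: "g \<in> G \<Longrightarrow> one g * x = x * one g"
proof -
  assume g: "g \<in> G"
  obtain f where f: "\<forall>e\<in>idents. f e \<in> E e" "x = (\<Sum>e\<in>idents. f e)"
    using unique_decomposition[of x] by blast
  have "one (tgt g) * f k = f k * one (tgt g)" if "k \<in> idents" for k
    using tgt_in_idents[OF g] that f(1) idents_subset by (auto simp: one_mult_E tgt_ident)
  then have "one (tgt g) * x = x * one (tgt g)"
    unfolding f(2) by (simp add: sum_distrib_left sum_distrib_right)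
  then show ?thesis by (simp only: one_tgt[OF g, symmetric])
qed

lemma one_idem: "g \<in> G \<Longrightarrow> one g * one g = one g"
  by (rule one_mult[OF _ one_in_E])

lemma one_sandwich: "g \<in> G \<Longrightarrow> one g * (x * one g) = x * one g"
  by (metis one_central one_idem mult.assoc)

definition act :: "'g \<Rightarrow> 'r \<Rightarrow> 'r" where
  "act g x = \<beta> g (x * one (ginv g))"

lemma one_inv_in_E: "g \<in> G \<Longrightarrow> x * one (ginv g) \<in> E (ginv g)"
  by (rule mult_left_in_E[OF inv_closed one_in_E[OF inv_closed]])

lemma act_in_E: "g \<in> G \<Longrightarrow> act g x \<in> E g"
  unfolding act_def by (rule \<beta>_in_E[OF _ one_inv_in_E])

lemma act_of_E: "g \<in> G \<Longrightarrow> x \<in> E (ginv g) \<Longrightarrow> act g x = \<beta> g x"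
  unfolding act_def using mult_one[OF inv_closed] by simp

lemma act_zero: "g \<in> G \<Longrightarrow> act g 0 = 0"
  using \<beta>_add[OF _ zero_in_E[OF inv_closed] zero_in_E[OF inv_closed], of g]
  by (simp add: act_def)

lemma act_add: "g \<in> G \<Longrightarrow> act g (x + y) = act g x + act g y"
  unfolding act_def by (simp add: distrib_right \<beta>_add one_inv_in_E)

lemma act_sum: "g \<in> G \<Longrightarrow> act g (\<Sum>i\<in>I. f i) = (\<Sum>i\<in>I. act g (f i))"
  by (induction I rule: infinite_finite_induct) (simp_all add: act_zero act_add)

lemma act_mult: "g \<in> G \<Longrightarrow> act g (x * y) = act g x * act g y"
proof -
  assume g: "g \<in> G"
  let ?u = "one (ginv g)"
  have "(x * ?u) * (y * ?u) = x * (?u * y) * ?u" by (simp add: mult.assoc)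
  also have "\<dots> = x * (y * ?u) * ?u" by (simp only: one_central[OF inv_closed[OF g], of y])
  also have "\<dots> = x * y * (?u * ?u)" by (simp add: mult.assoc)
  finally have "x * y * ?u = (x * ?u) * (y * ?u)" by (simp add: one_idem[OF inv_closed[OF g]])
  then show ?thesis unfolding act_def using \<beta>_mult[OF g one_inv_in_E[OF g] one_inv_in_E[OF g]] by simp
qed

lemma act_one_inv: "g \<in> G \<Longrightarrow> act g (one (ginv g)) = one g"
  by (simp add: act_of_E one_in_E inv_closed \<beta>_one)

lemma act_ident: "e \<in> idents \<Longrightarrow> act e x = x * one e"
  using \<beta>_ident[OF _ mult_left_in_E[OF _ one_in_E]] idents_subset
  by (auto simp: act_def inv_ident)

lemma act_vanishes:
  assumes h: "h \<in> G" and g: "g \<in> G" and x: "x \<in> E g" and "src h \<noteq> tgt g"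
  shows "act h x = 0"
  using one_mult_E(2)[OF src_in_idents[OF h] g x] one_inv[OF h] assms(4) act_zero[OF h]
  by (simp add: act_def)

lemma act_comp:
  assumes h: "h \<in> G" and g: "g \<in> G" and hg: "src h = tgt g"
  shows "act h (act g x) = act (mul h g) x"
proof -
  have "act g x \<in> E (ginv h)" using act_in_E[OF g] E_tgt[OF g] E_inv[OF h] hg by simp
  moreover have "one (ginv (mul h g)) = one (ginv g)"
    using mul_closed[OF h g hg] one_inv g by metis
  ultimately show ?thesis using \<beta>_comp[OF h g hg one_inv_in_E[OF g]] act_of_E[OF h]
    by (simp add: act_def)
qed

lemma invariants_iff: "t \<in> invariants G ginv one \<beta> \<longleftrightarrow> (\<forall>g\<in>G. act g t = t * one g)"
  by (simp add: invariants_def act_def)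

lemma act_invariant_mult:
  assumes t: "t \<in> invariants G ginv one \<beta>" and g: "g \<in> G"
  shows "act g (t * y) = t * act g y"
  using t g act_mult[OF g] one_mult[OF g act_in_E[OF g]] by (simp add: invariants_iff mult.assoc)

definition trace :: "'r \<Rightarrow> 'r" where
  "trace x = (\<Sum>g\<in>G. act g x)"

lemma trace_mult_one: "e \<in> idents \<Longrightarrow> trace x * one e = (\<Sum>g\<in>{g\<in>G. tgt g = e}. act g x)"
proof -
  assume e: "e \<in> idents"
  have "trace x * one e = (\<Sum>g\<in>G. if tgt g = e then act g x else 0)"
    unfolding trace_def sum_distrib_right by (rule sum.cong) (simp_all add: one_mult_E(2)[OF e _ act_in_E])
  then show ?thesis using finite_G by (simp add: sum.inter_filter)
qed

text \<open>Applying \<open>act h\<close> kills the summands with \<open>tgt g \<noteq> src h\<close> and maps the others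
  bijectively, via \<open>g \<mapsto> hg\<close>, onto those with \<open>tgt g = tgt h\<close>.\<close>
lemma trace_in_invariants: "trace x \<in> invariants G ginv one \<beta>"
  unfolding invariants_iff
proof
  fix h assume h: "h \<in> G"
  have "act h (trace x) = (\<Sum>g\<in>G. if tgt g = src h then act (mul h g) x else 0)"
    unfolding trace_def act_sum[OF h]
    by (rule sum.cong) (auto simp: act_comp[OF h] act_vanishes[OF h _ act_in_E])
  also have "\<dots> = (\<Sum>g\<in>{g\<in>G. tgt g = src h}. act (mul h g) x)"
    using finite_G by (simp add: sum.inter_filter)
  also have "\<dots> = (\<Sum>g\<in>{g\<in>G. tgt g = tgt h}. act g x)"
  proof (rule sum.reindex_bij_witness[where i = "mul (ginv h)" and j = "mul h"])
    fix a assume "a \<in> {g\<in>G. tgt g = src h}"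
    then show "mul (ginv h) (mul h a) = a" "mul h a \<in> {g\<in>G. tgt g = tgt h}"
      using inv_mul_cancel_left[OF h] mul_closed[OF h] by auto
  next
    fix b assume "b \<in> {g\<in>G. tgt g = tgt h}"
    then show "mul h (mul (ginv h) b) = b" "mul (ginv h) b \<in> {g\<in>G. tgt g = src h}"
      using mul_inv_cancel_left[OF h] mul_closed[OF inv_closed[OF h]] src_inv[OF h] tgt_inv[OF h]
      by auto
  qed simp
  also have "\<dots> = trace x * one h"
    using trace_mult_one[OF tgt_in_idents[OF h]] one_tgt[OF h] by simp
  finally show "act h (trace x) = trace x * one h" .
qed

lemma Jset_iff: "a \<in> Jset ginv E one \<beta> g \<longleftrightarrow> a \<in> E g \<and> (\<forall>x. a * act g x = x * a)"
  by (simp add: Jset_def act_def)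

lemma Jset_sum_in_commutant:
  assumes a: "\<forall>g\<in>G. a g \<in> Jset ginv E one \<beta> g"
  shows "(\<Sum>g\<in>G. a g) \<in> commutant UNIV (invariants G ginv one \<beta>)"
  unfolding commutant_def
proof (intro CollectI conjI UNIV_I ballI)
  fix t assume t: "t \<in> invariants G ginv one \<beta>"
  have "t * a g = a g * t" if g: "g \<in> G" for g
  proof -
    have aE: "a g \<in> E g" and aJ: "\<And>x. a g * act g x = x * a g"
      using a g by (auto simp: Jset_iff)
    have "t * a g = a g * (t * one g)" using aJ[of t] t g by (simp add: invariants_iff)
    also have "\<dots> = a g * one g * t" by (simp only: one_central[OF g, of t, symmetric] mult.assoc)
    also have "\<dots> = a g * t" by (simp only: mult_one[OF g aE])
    finally show ?thesis .
  qed
  then show "(\<Sum>g\<in>G. a g) * t = t * (\<Sum>g\<in>G. a g)" by (simp add: sum_distrib_left sum_distrib_right)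
qed

lemma sum_idents: "(\<Sum>g\<in>G. if g \<in> idents then f g else 0) = (\<Sum>e\<in>idents. f e)"
proof -
  have "{g \<in> G. g \<in> idents} = idents" using idents_subset by auto
  then show ?thesis using sum.inter_filter[OF finite_G, of f "\<lambda>g. g \<in> idents"] by simp
qed

end

locale galois_coordinates = groupoid_unital_action sc G mul ginv E one \<beta>
  for sc :: "'k::comm_ring_1 \<Rightarrow> 'r::ring_1 \<Rightarrow> 'r" and G :: "'g set" and mul ginv
    and E :: "'g \<Rightarrow> 'r set" and one :: "'g \<Rightarrow> 'r" and \<beta> +
  fixes m :: nat and xs ys :: "nat \<Rightarrow> 'r"
  assumes galois_condition:
    "g \<in> G \<Longrightarrow> (\<Sum>i<m. xs i * \<beta> g (ys i * one (ginv g))) = (if g \<in> gidents G mul ginv then one g else 0)"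
begin

lemma galois: "g \<in> G \<Longrightarrow> (\<Sum>i<m. xs i * act g (ys i)) = (if g \<in> idents then one g else 0)"
  unfolding act_def by (rule galois_condition)

text \<open>Apply \<open>act g\<close> to the Galois condition at \<open>g\<inverse>\<close>.\<close>
lemma galois_dual: "g \<in> G \<Longrightarrow> (\<Sum>i<m. act g (xs i) * ys i) = (if g \<in> idents then one g else 0)"
proof -
  assume g: "g \<in> G"
  define k where "k = ginv g"
  have k: "k \<in> G" "mul g k = tgt g" "src g = tgt k" "k \<in> idents \<longleftrightarrow> g \<in> idents"
    unfolding k_def using inv_closed[OF g] tgt_inv[OF g] inv_ident inv_inv[OF g]
    by (auto simp: gran_def)
  have "act g (xs i) * act g (act k (ys i)) = act g (xs i) * ys i" for i
  proof -
    have "act g (xs i) * act g (act k (ys i)) = act g (xs i) * (one g * ys i)"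
      using act_comp[OF g k(1) k(3)] act_ident[OF tgt_in_idents[OF g]] one_tgt[OF g] one_central[OF g] k(2)
      by simp
    also have "\<dots> = act g (xs i) * ys i"
      by (simp only: mult.assoc[symmetric] mult_one[OF g act_in_E[OF g]])
    finally show ?thesis .
  qed
  then have "(\<Sum>i<m. act g (xs i) * ys i) = act g (\<Sum>i<m. xs i * act k (ys i))"
    by (simp add: act_sum[OF g] act_mult[OF g])
  also have "\<dots> = (if g \<in> idents then one g else 0)"
    using galois[OF k(1)] k(4) act_one_inv[OF g] act_zero[OF g] by (simp add: k_def)
  finally show ?thesis .
qed

lemma trace_expansion_left: "(\<Sum>i<m. xs i * trace (ys i * r)) = r"
proof -
  have "(\<Sum>i<m. xs i * trace (ys i * r)) = (\<Sum>g\<in>G. (\<Sum>i<m. xs i * act g (ys i)) * act g r)"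
    unfolding trace_def
    by (simp add: sum_distrib_left sum_distrib_right act_mult mult.assoc sum.swap[of _ G])
  also have "\<dots> = (\<Sum>g\<in>G. if g \<in> idents then one g * (r * one g) else 0)"
    by (rule sum.cong) (simp_all add: galois act_ident)
  also have "\<dots> = (\<Sum>e\<in>idents. one e * (r * one e))" by (rule sum_idents)
  also have "\<dots> = (\<Sum>e\<in>idents. r * one e)"
    using idents_subset by (intro sum.cong) (auto simp: one_sandwich)
  also have "\<dots> = r" by (simp add: sum_distrib_left[symmetric] sum_one_idents)
  finally show ?thesis .
qed

lemma trace_expansion_right: "(\<Sum>i<m. trace (w * xs i) * ys i) = w"
proof -
  have "(\<Sum>i<m. trace (w * xs i) * ys i) = (\<Sum>g\<in>G. act g w * (\<Sum>i<m. act g (xs i) * ys i))"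
    unfolding trace_def
    by (simp add: sum_distrib_left sum_distrib_right act_mult mult.assoc sum.swap[of _ G])
  also have "\<dots> = (\<Sum>g\<in>G. if g \<in> idents then w * one g * one g else 0)"
    by (rule sum.cong) (simp_all add: galois_dual act_ident)
  also have "\<dots> = (\<Sum>e\<in>idents. w * one e * one e)" by (rule sum_idents)
  also have "\<dots> = (\<Sum>e\<in>idents. w * one e)"
    using idents_subset by (intro sum.cong) (auto simp: mult.assoc one_idem)
  also have "\<dots> = w" by (simp add: sum_distrib_left[symmetric] sum_one_idents)
  finally show ?thesis .
qed

lemma act_by_trace_expansion: "g \<in> G \<Longrightarrow> (\<Sum>i<m. trace (w * xs i) * act g (ys i)) = act g w"
  by (simp add: act_invariant_mult[OF trace_in_invariants, symmetric] act_sum[symmetric]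
      trace_expansion_right)

lemma commutant_trace_commute:
  assumes "c \<in> commutant UNIV (invariants G ginv one \<beta>)"
  shows "c * trace x = trace x * c" and "c * (trace x * y) = trace x * (c * y)"
  using assms trace_in_invariants unfolding commutant_def by (auto simp: mult.assoc[symmetric])

definition component :: "'r \<Rightarrow> 'g \<Rightarrow> 'r" where
  "component c g = (\<Sum>i<m. xs i * c * act g (ys i))"

lemma sum_components:
  assumes c: "c \<in> commutant UNIV (invariants G ginv one \<beta>)"
  shows "(\<Sum>g\<in>G. component c g) = c"
proof -
  have "(\<Sum>g\<in>G. component c g) = (\<Sum>i<m. xs i * c * trace (ys i))"
    unfolding component_def trace_def by (simp add: sum_distrib_left sum.swap[of _ G])
  also have "\<dots> = (\<Sum>i<m. xs i * trace (ys i * 1)) * c"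
    by (simp add: sum_distrib_right mult.assoc commutant_trace_commute(1)[OF c])
  also have "\<dots> = c" by (simp only: trace_expansion_left mult_1_left)
  finally show ?thesis .
qed

text \<open>Expand \<open>z x\<^sub>i\<close> by the left trace expansion, move \<open>c\<close> past the traces, and
  recombine with the right one in the form \<open>act_by_trace_expansion\<close>.\<close>
lemma component_in_Jset:
  assumes c: "c \<in> commutant UNIV (invariants G ginv one \<beta>)" and g: "g \<in> G"
  shows "component c g \<in> Jset ginv E one \<beta> g"
  unfolding Jset_iff
proof (intro conjI allI)
  show "component c g \<in> E g"
    unfolding component_def by (rule sum_in_E[OF g]) (rule mult_left_in_E[OF g act_in_E[OF g]])
  fix z
  have "z * component c g = (\<Sum>i<m. (z * xs i) * c * act g (ys i))"
    unfolding component_def by (simp add: sum_distrib_left mult.assoc)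
  also have "\<dots> = (\<Sum>i<m. (\<Sum>j<m. xs j * trace (ys j * (z * xs i))) * c * act g (ys i))"
    by (simp only: trace_expansion_left)
  also have "\<dots> = (\<Sum>i<m. \<Sum>j<m. xs j * c * (trace (ys j * z * xs i) * act g (ys i)))"
    by (simp add: sum_distrib_right mult.assoc commutant_trace_commute(2)[OF c])
  also have "\<dots> = (\<Sum>j<m. xs j * c * (\<Sum>i<m. trace (ys j * z * xs i) * act g (ys i)))"
    by (subst sum.swap) (simp add: sum_distrib_left)
  also have "\<dots> = (\<Sum>j<m. xs j * c * act g (ys j) * act g z)"
    using act_by_trace_expansion[OF g, of "ys _ * z"] by (simp add: act_mult[OF g] mult.assoc)
  also have "\<dots> = component c g * act g z"
    unfolding component_def by (simp add: sum_distrib_right)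
  finally show "component c g * act g z = z * component c g" by simp
qed

lemma Jset_galois_pairing:
  assumes a: "a \<in> Jset ginv E one \<beta> g" and g: "g \<in> G" and h: "h \<in> G"
  shows "a * (\<Sum>i<m. act g (xs i) * act h (ys i)) = (if g = h then a else 0)"
proof (cases "tgt g = tgt h")
  case False
  have "a \<in> E g" using a by (simp add: Jset_iff)
  then have "a * act g (xs i) \<in> E (tgt g)" "act h (ys i) \<in> E (tgt h)" for i
    using mult_right_in_E[OF g] act_in_E[OF h] E_tgt[OF g] E_tgt[OF h] by auto
  then have "a * act g (xs i) * act h (ys i) = 0" for i
    using E_orthogonal[OF tgt_in_idents[OF g] tgt_in_idents[OF h] False] by blast
  then show ?thesis using False by (auto simp: sum_distrib_left mult.assoc)
next
  case True
  define k where "k = mul (ginv g) h"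
  have k: "k \<in> G" "src g = tgt k" "mul g k = h"
    using mul_closed[OF inv_closed[OF g] h] src_inv[OF g] tgt_inv[OF g] mul_inv_cancel_left[OF g h] True
    by (simp_all add: k_def)
  have "(\<Sum>i<m. act g (xs i) * act h (ys i)) = act g (\<Sum>i<m. xs i * act k (ys i))"
    using act_comp[OF g k(1) k(2)] k(3) by (simp add: act_sum[OF g] act_mult[OF g])
  also have "\<dots> = (if k \<in> idents then one g else 0)"
  proof (cases "k \<in> idents")
    case True
    then have "one k = one (ginv g)" using tgt_ident[OF True] k(2) one_inv[OF g] by simp
    then show ?thesis using galois[OF k(1)] True act_one_inv[OF g] by simp
  next
    case False
    then show ?thesis using galois[OF k(1)] act_zero[OF g] by simp
  qed
  also have "k \<in> idents \<longleftrightarrow> g = h"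
  proof
    assume "k \<in> idents"
    then have "k = src g" using tgt_ident k(2) by simp
    then show "g = h" using k(3) mul_src_right[OF g] by simp
  next
    assume "g = h"
    then show "k \<in> idents" using src_in_idents[OF g] by (simp add: k_def gdom_def)
  qed
  finally show ?thesis using mult_one[OF g] a by (auto simp: Jset_iff)
qed

lemma Jset_sum_eq_zero:
  assumes a: "\<forall>g\<in>G. a g \<in> Jset ginv E one \<beta> g" and sum: "(\<Sum>g\<in>G. a g) = 0" and h: "h \<in> G"
  shows "a h = 0"
proof -
  have "0 = (\<Sum>i<m. xs i * (\<Sum>g\<in>G. a g) * act h (ys i))" using sum by simp
  also have "\<dots> = (\<Sum>g\<in>G. \<Sum>i<m. a g * act g (xs i) * act h (ys i))"
    using a by (simp add: sum_distrib_left sum_distrib_right sum.swap[of _ G] Jset_iff)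
  also have "\<dots> = (\<Sum>g\<in>G. if g = h then a h else 0)"
    using a Jset_galois_pairing[OF _ _ h] by (intro sum.cong) (auto simp: sum_distrib_left mult.assoc)
  also have "\<dots> = a h" using h finite_G by simp
  finally show ?thesis by simp
qed

end

theorem lemma3p1:
  fixes sc :: "'k::comm_ring_1 \<Rightarrow> 'r::ring_1 \<Rightarrow> 'r"
    and G :: "'g set" and mul :: "'g \<Rightarrow> 'g \<Rightarrow> 'g" and ginv :: "'g \<Rightarrow> 'g"
    and E :: "'g \<Rightarrow> 'r set" and one :: "'g \<Rightarrow> 'r" and \<beta> :: "'g \<Rightarrow> 'r \<Rightarrow> 'r"
  assumes "is_algebra sc"
    and "groupoid G mul ginv" and "finite G"
    and "unital_action sc G mul ginv E one \<beta>"
    and "galois_ext G mul ginv one \<beta>"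
  shows "commutant UNIV (invariants G ginv one \<beta>)
           = {\<Sum>g\<in>G. a g | a. \<forall>g\<in>G. a g \<in> Jset ginv E one \<beta> g}
      \<and> (\<forall>a. (\<forall>g\<in>G. a g \<in> Jset ginv E one \<beta> g) \<and> (\<Sum>g\<in>G. a g) = 0 \<longrightarrow> (\<forall>g\<in>G. a g = 0))"
proof -
  obtain m :: nat and xs ys :: "nat \<Rightarrow> 'r" where galois: "\<forall>g\<in>G. (\<Sum>i<m. xs i * \<beta> g (ys i * one (ginv g)))
      = (if g \<in> gidents G mul ginv then one g else 0)"
    using assms(5) unfolding galois_ext_def by metis
  interpret galois_coordinates sc G mul ginv E one \<beta> m xs ys
    by (intro galois_coordinates.intro groupoid_unital_action.intro galois_coordinates_axioms.intro
        assms(2-4)) (use galois in blast)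
  have "commutant UNIV (invariants G ginv one \<beta>) \<subseteq> {\<Sum>g\<in>G. a g | a. \<forall>g\<in>G. a g \<in> Jset ginv E one \<beta> g}"
  proof
    fix c assume c: "c \<in> commutant UNIV (invariants G ginv one \<beta>)"
    show "c \<in> {\<Sum>g\<in>G. a g | a. \<forall>g\<in>G. a g \<in> Jset ginv E one \<beta> g}"
      using sum_components[OF c] component_in_Jset[OF c] by (auto intro!: exI[of _ "component c"])
  qed
  moreover have "{\<Sum>g\<in>G. a g | a. \<forall>g\<in>G. a g \<in> Jset ginv E one \<beta> g} \<subseteq> commutant UNIV (invariants G ginv one \<beta>)"
    using Jset_sum_in_commutant by blast
  ultimately show ?thesis using Jset_sum_eq_zero by blast
qed

end
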